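(* Let $f$ be a 3-CNF formula with clauses $C_1,\dots,C_m$ over variables $x_1,\dots,x_n$, each clause being a disjunction of three literal occurrences. Let $H$ be the graph constructed as follows: for each clause $C_i=x\vee y\vee z$ introduce six vertices $x^{(i,1)},y^{(i,1)},z^{(i,1)},x^{(i,2)},y^{(i,2)},z^{(i,2)}$ inducing a subgraph $H_i$ which is the complete graph on these six vertices minus the three edges $x^{(i,1)}x^{(i,2)}$, $y^{(i,1)}y^{(i,2)}$, $z^{(i,1)}z^{(i,2)}$; the vertices $x^{(i,1)},y^{(i,1)},z^{(i,1)}$ are associated with the literals $x,y,z$ of $C_i$. Additionally, for any two vertices $u,v$ lying in different subgraphs $H_i\neq H_j$, both associated with literals, such that the literal associated with $u$ is the negation of the literal associated with $v$, add the edge $uv$. There are no other edges. Then $\mathrm{diss}(H)=2m$, and $f$ is satisfiable if and only if $\mathrm{diss}(H)=\alpha(H)$.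
   Context: All graphs are finite, simple and undirected. A set $I$ of vertices of a graph $G$ is a dissociation set if the induced subgraph $G[I]$ has maximum degree at most $1$; $\mathrm{diss}(G)$ is the maximum order of a dissociation set in $G$. $\alpha(G)$ is the independence number. *)

theory Defs
  imports Main
begin

definition dissociation_set :: "'a set \<Rightarrow> ('a \<Rightarrow> 'a \<Rightarrow> bool) \<Rightarrow> 'a set \<Rightarrow> bool" where
  "dissociation_set V E I \<longleftrightarrow> I \<subseteq> V \<and> (\<forall>v\<in>I. card {u\<in>I. E v u} \<le> 1)"

definition diss :: "'a set \<Rightarrow> ('a \<Rightarrow> 'a \<Rightarrow> bool) \<Rightarrow> nat" where
  "diss V E = Max (card ` {I. dissociation_set V E I})"

definition independent_set :: "'a set \<Rightarrow> ('a \<Rightarrow> 'a \<Rightarrow> bool) \<Rightarrow> 'a set \<Rightarrow> bool" where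
  "independent_set V E I \<longleftrightarrow> I \<subseteq> V \<and> (\<forall>u\<in>I. \<forall>v\<in>I. \<not> E u v)"

definition alpha :: "'a set \<Rightarrow> ('a \<Rightarrow> 'a \<Rightarrow> bool) \<Rightarrow> nat" where
  "alpha V E = Max (card ` {I. independent_set V E I})"

(* 3-CNF: a literal is (variable index, polarity); True = positive. *)
type_synonym lit = "nat \<times> bool"
type_synonym clause = "lit \<times> lit \<times> lit"

definition neg_lit :: "lit \<Rightarrow> lit" where
  "neg_lit l = (fst l, \<not> snd l)"

definition lit_true :: "(nat \<Rightarrow> bool) \<Rightarrow> lit \<Rightarrow> bool" where
  "lit_true a l \<longleftrightarrow> a (fst l) = snd l"

definition clause_lit :: "clause \<Rightarrow> nat \<Rightarrow> lit" where
  "clause_lit c p = (case c of (x, y, z) \<Rightarrow> if p = 0 then x else if p = 1 then y else z)"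

definition satisfiable :: "clause list \<Rightarrow> bool" where
  "satisfiable f \<longleftrightarrow> (\<exists>a. \<forall>c\<in>set f. \<exists>p<3. lit_true a (clause_lit c p))"

(* Vertices (i, p, k): clause i < m (0-based), position p < 3, copy k \<in> {1,2}.
   Vertex (i,p,1) is associated with literal clause_lit (f!i) p. *)
definition H_verts :: "clause list \<Rightarrow> (nat \<times> nat \<times> nat) set" where
  "H_verts f = {(i, p, k). i < length f \<and> p < 3 \<and> (k = 1 \<or> k = 2)}"

definition H_adj :: "clause list \<Rightarrow> (nat \<times> nat \<times> nat) \<Rightarrow> (nat \<times> nat \<times> nat) \<Rightarrow> bool" where
  "H_adj f u v \<longleftrightarrow> u \<in> H_verts f \<and> v \<in> H_verts f \<and> u \<noteq> v \<and>
     (case u of (i, p, k) \<Rightarrow> case v of (j, q, l) \<Rightarrow>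
        (i = j \<and> p \<noteq> q) \<or>
        (i \<noteq> j \<and> k = 1 \<and> l = 1 \<and> clause_lit (f ! i) p = neg_lit (clause_lit (f ! j) q)))"

end

theory Submission imports Defs begin

text \<open>Every clause gadget is a complete tripartite graph \<open>K\<^sub>2\<^sub>,\<^sub>2\<^sub>,\<^sub>2\<close> whose parts are the
  two copies of a literal occurrence. Among any three of its vertices one is adjacent to the
  other two, so a dissociation set meets each gadget in at most two vertices, and two second
  copies per gadget attain \<open>2m\<close>. An independent set of size \<open>2m\<close> must then pick, in every
  gadget, both copies of a single occurrence; the first copies are pairwise non-complementary
  literals, i.e. they define a satisfying assignment. Conversely the two copies of a true
  occurrence in every clause form an independent set of size \<open>2m\<close>.\<close>

lemma independent_set_imp_dissociation_set:
  assumes "independent_set V E I" shows "dissociation_set V E I"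
proof -
  have "card {u\<in>I. E v u} = 0" if "v \<in> I" for v
    using assms that unfolding independent_set_def by (simp add: card_eq_0_iff)
  with assms show ?thesis unfolding independent_set_def dissociation_set_def by simp
qed

lemma dissociation_set_two_neighbours:
  assumes "finite V" "dissociation_set V E I"
    and "v \<in> I" "x \<in> I" "y \<in> I" "x \<noteq> y" "E v x" "E v y"
  shows False
proof -
  have "finite I" using assms(1,2) finite_subset unfolding dissociation_set_def by blast
  have "{x, y} \<subseteq> {u\<in>I. E v u}" using assms by auto
  then have "2 \<le> card {u\<in>I. E v u}"
    using card_mono[of "{u\<in>I. E v u}" "{x, y}"] \<open>finite I\<close> \<open>x \<noteq> y\<close> by auto
  then show False using assms(2,3) unfolding dissociation_set_def by fastforce
qed

lemma finite_card_dissociation_sets: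
  "finite V \<Longrightarrow> finite (card ` {I. dissociation_set V E I})"
  by (rule finite_imageI, rule finite_subset[of _ "Pow V"])
     (auto simp: dissociation_set_def)

lemma finite_card_independent_sets:
  "finite V \<Longrightarrow> finite (card ` {I. independent_set V E I})"
  by (rule finite_imageI, rule finite_subset[of _ "Pow V"])
     (auto simp: independent_set_def)

lemma diss_eqI:
  assumes "finite V" "dissociation_set V E I" "card I = n"
    and "\<And>J. dissociation_set V E J \<Longrightarrow> card J \<le> n"
  shows "diss V E = n"
  unfolding diss_def
  by (rule Max_eqI[OF finite_card_dissociation_sets[OF assms(1)]]) (use assms in auto)

lemma card_le_alpha:
  "finite V \<Longrightarrow> independent_set V E I \<Longrightarrow> card I \<le> alpha V E"
  unfolding alpha_def by (rule Max_ge[OF finite_card_independent_sets]) auto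

lemma alpha_attained:
  assumes "finite V"
  obtains I where "independent_set V E I" "card I = alpha V E"
proof -
  have "{} \<in> {I. independent_set V E I}" by (simp add: independent_set_def)
  then have "card ` {I. independent_set V E I} \<noteq> {}" by blast
  from Max_in[OF finite_card_independent_sets[OF assms] this] that show ?thesis
    unfolding alpha_def by auto
qed

lemma alpha_le_diss:
  assumes "finite V" shows "alpha V E \<le> diss V E"
proof -
  obtain I where "independent_set V E I" "card I = alpha V E"
    using alpha_attained[OF assms] .
  then show ?thesis
    unfolding diss_def
    using Max_ge[OF finite_card_dissociation_sets[OF assms]] independent_set_imp_dissociation_set
    by fastforce
qed

definition clause_block :: "nat \<Rightarrow> (nat \<times> nat \<times> nat) set" where
  "clause_block i = {v. fst v = i}"

lemma finite_H_verts: "finite (H_verts f)"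
  by (rule finite_subset[of _ "{..<length f} \<times> {..<3} \<times> {..<3}"])
     (auto simp: H_verts_def)

lemma card_eq_sum_clause_blocks:
  assumes "I \<subseteq> H_verts f"
  shows "card I = (\<Sum>i<length f. card (I \<inter> clause_block i))"
proof -
  have "finite I" using assms finite_H_verts finite_subset by blast
  have "I = (\<Union>i<length f. I \<inter> clause_block i)"
    using assms unfolding H_verts_def clause_block_def by auto
  also have "card \<dots> = (\<Sum>i<length f. card (I \<inter> clause_block i))"
    by (rule card_UN_disjoint) (auto simp: clause_block_def intro: finite_subset[OF _ \<open>finite I\<close>])
  finally show ?thesis .
qed

lemma H_adj_same_clause:
  "H_adj f (i, p, k) (i, q, l) \<longleftrightarrow> (i, p, k) \<in> H_verts f \<and> (i, q, l) \<in> H_verts f \<and> p \<noteq> q"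
  unfolding H_adj_def by auto

lemma dissociation_set_clause_block_card_le:
  assumes D: "dissociation_set (H_verts f) (H_adj f) I"
  shows "card (I \<inter> clause_block i) \<le> 2"
proof (rule ccontr)
  assume "\<not> ?thesis"
  then have "3 \<le> card (I \<inter> clause_block i)" by simp
  then obtain T where "T \<subseteq> I \<inter> clause_block i" "card T = 3" "finite T"
    by (rule obtain_subset_with_card_n)
  then obtain a b c where abc: "a \<in> I" "b \<in> I" "c \<in> I" "a \<noteq> b" "b \<noteq> c" "a \<noteq> c"
    and blk: "fst a = i" "fst b = i" "fst c = i"
    unfolding card_3_iff clause_block_def by auto
  have V: "a \<in> H_verts f" "b \<in> H_verts f" "c \<in> H_verts f"
    using abc D unfolding dissociation_set_def by auto
  obtain p1 k1 p2 k2 p3 k3 where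
    pk: "a = (i, p1, k1)" "b = (i, p2, k2)" "c = (i, p3, k3)"
    using blk by (metis prod.collapse)
  have "k1 \<in> {1,2}" "k2 \<in> {1,2}" "k3 \<in> {1,2}" using V pk by (auto simp: H_verts_def)
  \<comment> \<open>each position has only two copies\<close>
  then have "\<not> (p1 = p2 \<and> p2 = p3)" using abc pk by auto
  then consider "p1 \<noteq> p2" "p1 \<noteq> p3" | "p2 \<noteq> p1" "p2 \<noteq> p3" | "p3 \<noteq> p1" "p3 \<noteq> p2"
    by blast
  then show False
  proof cases
    case 1
    then show False using dissociation_set_two_neighbours[OF finite_H_verts D, of a b c]
      abc V pk by (simp add: H_adj_same_clause)
  next
    case 2
    then show False using dissociation_set_two_neighbours[OF finite_H_verts D, of b a c]
      abc V pk by (simp add: H_adj_same_clause)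
  next
    case 3
    then show False using dissociation_set_two_neighbours[OF finite_H_verts D, of c a b]
      abc V pk by (simp add: H_adj_same_clause)
  qed
qed

lemma dissociation_set_card_le:
  assumes D: "dissociation_set (H_verts f) (H_adj f) I"
  shows "card I \<le> 2 * length f"
proof -
  have "I \<subseteq> H_verts f" using D unfolding dissociation_set_def by simp
  then have "card I = (\<Sum>i<length f. card (I \<inter> clause_block i))"
    by (rule card_eq_sum_clause_blocks)
  also have "\<dots> \<le> (\<Sum>i<length f. 2)"
    by (rule sum_mono) (rule dissociation_set_clause_block_card_le[OF D])
  finally show ?thesis by simp
qed

lemma diss_H: "diss (H_verts f) (H_adj f) = 2 * length f"
proof (rule diss_eqI[OF finite_H_verts _ _ dissociation_set_card_le])
  define D where "D = (\<lambda>(i, p). (i, p, 2::nat)) ` ({..<length f} \<times> {..<2::nat})"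
  show "card D = 2 * length f"
    unfolding D_def by (subst card_image) (auto simp: inj_on_def)
  have "card {u \<in> D. H_adj f v u} \<le> 1" if "v \<in> D" for v
  proof -
    obtain i p where v: "v = (i, p, 2)" "p < 2" using \<open>v \<in> D\<close> unfolding D_def by auto
    then have "{u \<in> D. H_adj f v u} \<subseteq> {(i, 1 - p, 2)}"
      unfolding D_def H_adj_def by auto
    then show ?thesis using card_mono[of "{(i, 1 - p, 2::nat)}"] by fastforce
  qed
  then show "dissociation_set (H_verts f) (H_adj f) D"
    unfolding dissociation_set_def D_def H_verts_def by auto
qed

lemma dissociation_set_card_eq_fills_clause_block:
  assumes D: "dissociation_set (H_verts f) (H_adj f) I"
    and size: "card I = 2 * length f" and i: "i < length f"
  shows "card (I \<inter> clause_block i) = 2"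
proof (rule ccontr)
  assume "card (I \<inter> clause_block i) \<noteq> 2"
  then have "card (I \<inter> clause_block i) < 2"
    using dissociation_set_clause_block_card_le[OF D] by (simp add: le_neq_implies_less)
  then have "(\<Sum>j<length f. card (I \<inter> clause_block j)) < (\<Sum>j<length f. 2)"
    using dissociation_set_clause_block_card_le[OF D] i
    by (intro sum_strict_mono_ex1) auto
  moreover have "I \<subseteq> H_verts f" using D unfolding dissociation_set_def by simp
  ultimately show False using card_eq_sum_clause_blocks size by simp
qed

lemma independent_set_full_clause_block_first_copy:
  assumes D: "independent_set (H_verts f) (H_adj f) I"
    and size: "card (I \<inter> clause_block i) = 2"
  shows "\<exists>p<3. (i, p, 1) \<in> I"
proof -
  obtain x y where xy: "I \<inter> clause_block i = {x, y}" "x \<noteq> y"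
    using size unfolding card_2_iff by blast
  then have "fst x = i" "fst y = i" unfolding clause_block_def by auto
  then obtain p k q l where pk: "x = (i, p, k)" "y = (i, q, l)" by (metis prod.collapse)
  have V: "x \<in> H_verts f" "y \<in> H_verts f" "x \<in> I" "y \<in> I"
    using D xy unfolding independent_set_def by auto
  then have "\<not> H_adj f (i, p, k) (i, q, l)" using D pk unfolding independent_set_def by auto
  then have "p = q" using V pk by (simp add: H_adj_same_clause)
  then show ?thesis using V pk xy by (auto simp: H_verts_def)
qed

lemma independent_set_first_copies_not_complementary:
  assumes "independent_set (H_verts f) (H_adj f) I" "(i, p, 1) \<in> I" "(j, q, 1) \<in> I"
  shows "clause_lit (f ! i) p \<noteq> neg_lit (clause_lit (f ! j) q)"
proof
  assume complementary: "clause_lit (f ! i) p = neg_lit (clause_lit (f ! j) q)"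
  \<comment> \<open>across gadgets by construction, within a gadget because complementary literals
    sit at different positions\<close>
  have "H_adj f (i, p, 1) (j, q, 1)"
    using assms complementary unfolding independent_set_def H_adj_def neg_lit_def
    by (auto simp: prod_eq_iff)
  then show False using assms unfolding independent_set_def by blast
qed

lemma satisfiable_imp_alpha_H:
  assumes "satisfiable f"
  shows "alpha (H_verts f) (H_adj f) = 2 * length f"
proof -
  obtain a where "\<forall>c\<in>set f. \<exists>p<3. lit_true a (clause_lit c p)"
    using assms unfolding satisfiable_def by auto
  then have "\<forall>i. \<exists>p. i < length f \<longrightarrow> p < 3 \<and> lit_true a (clause_lit (f ! i) p)"
    by (meson nth_mem)
  then obtain P where P: "\<And>i. i < length f \<Longrightarrow> P i < 3 \<and> lit_true a (clause_lit (f ! i) (P i))"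
    by (metis choice)
  define I where "I = (\<lambda>(i, k). (i, P i, k)) ` ({..<length f} \<times> {1, 2::nat})"
  have "card I = 2 * length f"
    unfolding I_def by (subst card_image) (auto simp: inj_on_def)
  moreover have "independent_set (H_verts f) (H_adj f) I"
    unfolding independent_set_def
  proof
    show "I \<subseteq> H_verts f" unfolding I_def H_verts_def using P by auto
    show "\<forall>u\<in>I. \<forall>v\<in>I. \<not> H_adj f u v"
    proof (intro ballI notI)
      fix u v assume "u \<in> I" "v \<in> I" "H_adj f u v"
      then obtain i k j l where "u = (i, P i, k)" "v = (j, P j, l)" "i < length f" "j < length f"
        "i \<noteq> j" "clause_lit (f ! i) (P i) = neg_lit (clause_lit (f ! j) (P j))"
        unfolding I_def H_adj_def by auto
      then show False using P[of i] P[of j] by (auto simp: lit_true_def neg_lit_def)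
    qed
  qed
  ultimately have "2 * length f \<le> alpha (H_verts f) (H_adj f)"
    using card_le_alpha[OF finite_H_verts] by metis
  then show ?thesis using alpha_le_diss[OF finite_H_verts, of f "H_adj f"] diss_H[of f] by simp
qed

lemma alpha_H_imp_satisfiable:
  assumes "alpha (H_verts f) (H_adj f) = 2 * length f"
  shows "satisfiable f"
proof -
  obtain I where D: "independent_set (H_verts f) (H_adj f) I" and size: "card I = 2 * length f"
    using alpha_attained[OF finite_H_verts] assms by metis
  define a where "a x \<longleftrightarrow> (\<exists>i p. (i, p, 1) \<in> I \<and> clause_lit (f ! i) p = (x, True))" for x
  show ?thesis unfolding satisfiable_def
  proof (intro exI[of _ a] ballI)
    fix c assume "c \<in> set f"
    then obtain i where i: "i < length f" "c = f ! i" by (auto simp: in_set_conv_nth)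
    obtain p where p: "p < 3" "(i, p, 1) \<in> I"
      using independent_set_full_clause_block_first_copy[OF D]
        dissociation_set_card_eq_fills_clause_block[OF independent_set_imp_dissociation_set[OF D] size i(1)]
      by blast
    obtain x b where l: "clause_lit (f ! i) p = (x, b)" by fastforce
    have "lit_true a (x, b)"
    proof (cases b)
      case True
      then show ?thesis using l p unfolding lit_true_def a_def by auto
    next
      case False
      have "\<not> a x"
      proof
        assume "a x"
        then obtain j q where j: "(j, q, 1) \<in> I" "clause_lit (f ! j) q = (x, True)"
          unfolding a_def by auto
        then show False
          using independent_set_first_copies_not_complementary[OF D p(2) j(1)] l False
          by (simp add: neg_lit_def)
      qed
      then show ?thesis using False unfolding lit_true_def by auto
    qed
    then show "\<exists>p<3. lit_true a (clause_lit c p)" using p l i by auto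
  qed
qed

theorem mainTheorem9:
  fixes f :: "clause list"
  shows "diss (H_verts f) (H_adj f) = 2 * length f \<and>
         (satisfiable f \<longleftrightarrow> diss (H_verts f) (H_adj f) = alpha (H_verts f) (H_adj f))"
proof -
  have "satisfiable f \<longleftrightarrow> alpha (H_verts f) (H_adj f) = 2 * length f"
    using satisfiable_imp_alpha_H alpha_H_imp_satisfiable by blast
  then show ?thesis using diss_H by auto
qed

end
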